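(* Let $s\geq 2$ be an integer and let $T$ be a tree with $n$ vertices in which every vertex has degree at most $s$, with Wiener index $\mathcal{W}$. Define $\mathcal{V}_{0,s}=T$ and, for $t\geq1$, let $\mathcal{V}_{t,s}$ be obtained from $\mathcal{V}_{t-1,s}$ by one application of the Vicsek fractal operation $V_s$. Then $\mathcal{V}_{t,s}$ has $n(s+1)^t$ vertices and its Wiener index is $$\mathcal{W}_{\mathcal{V}_{t,s}}=3^{t}(s+1)^{2t}\mathcal{W}+\frac{(s-2)(s+1)\,n^{2}(3^{t}-1)(s+1)^{2(t-1)}}{2}+\frac{(s+2)\,n(s+1)^{t-1}\left[3^{t}(s+1)^{t}-1\right]}{3s+2}.$$
   Context: All graphs are simple and connected. The distance $d_{uv}$ is the number of edges of a shortest path between $u$ and $v$; the Wiener index of a graph is the sum of $d_{uv}$ over all unordered pairs of distinct vertices. The Vicsek fractal operation $V_s$ applied to a tree whose maximum degree is at most $s$: every edge $uv$ is replaced by a path $u-a-b-v$ through two new vertices, and then each original vertex $v$ of degree $k_v$ (in the tree before the operation) receives $s-k_v$ new pendant leaves, so that every original vertex has degree $s$; the inserted vertices receive no further leaves. The result is again a tree of maximum degree at most $s$, so the operation can be iterated. *)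

theory Defs
  imports Complex_Main
begin

type_synonym 'a graph = "'a set \<times> 'a set set"

definition verts :: "'a graph \<Rightarrow> 'a set" where "verts G = fst G"
definition edges :: "'a graph \<Rightarrow> 'a set set" where "edges G = snd G"

definition simple_graph :: "'a graph \<Rightarrow> bool" where
  "simple_graph G \<longleftrightarrow> finite (verts G) \<and>
     (\<forall>e\<in>edges G. \<exists>u v. e = {u, v} \<and> u \<noteq> v \<and> u \<in> verts G \<and> v \<in> verts G)"

definition degree :: "'a graph \<Rightarrow> 'a \<Rightarrow> nat" where
  "degree G v = card {e \<in> edges G. v \<in> e}"

text \<open>A walk is a nonempty vertex list with consecutive vertices adjacent; its length is
  the number of edges, i.e. length xs - 1.\<close>
definition walk :: "'a graph \<Rightarrow> 'a list \<Rightarrow> bool" where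
  "walk G xs \<longleftrightarrow> xs \<noteq> [] \<and> set xs \<subseteq> verts G \<and>
     (\<forall>i. Suc i < length xs \<longrightarrow> {xs ! i, xs ! Suc i} \<in> edges G)"

definition connected_graph :: "'a graph \<Rightarrow> bool" where
  "connected_graph G \<longleftrightarrow> verts G \<noteq> {} \<and>
     (\<forall>u\<in>verts G. \<forall>v\<in>verts G. \<exists>xs. walk G xs \<and> hd xs = u \<and> last xs = v)"

definition has_cycle :: "'a graph \<Rightarrow> bool" where
  "has_cycle G \<longleftrightarrow> (\<exists>xs. walk G xs \<and> distinct xs \<and> length xs \<ge> 3 \<and> {last xs, hd xs} \<in> edges G)"

definition is_tree :: "'a graph \<Rightarrow> bool" where
  "is_tree G \<longleftrightarrow> simple_graph G \<and> connected_graph G \<and> \<not> has_cycle G"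

definition gdist :: "'a graph \<Rightarrow> 'a \<Rightarrow> 'a \<Rightarrow> nat" where
  "gdist G u v = (LEAST k. \<exists>xs. walk G xs \<and> hd xs = u \<and> last xs = v \<and> length xs = Suc k)"

text \<open>Wiener index: sum of distances over unordered pairs of distinct vertices
  (each unordered pair counted once: half the sum over ordered pairs; diagonal terms are 0).\<close>
definition wiener :: "'a graph \<Rightarrow> real" where
  "wiener G = (\<Sum>u\<in>verts G. \<Sum>v\<in>verts G. real (gdist G u v)) / 2"

text \<open>Labels of the vertices of V_s(G): original vertices, the two subdivision vertices of
  each edge {u,v} (Sub u v is the one adjacent to u), and the new pendant leaves.\<close>
datatype 'a vlabel = Old 'a | Sub 'a 'a | Leaf 'a nat

definition vicsek_labels :: "nat \<Rightarrow> 'a graph \<Rightarrow> 'a vlabel set" where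
  "vicsek_labels s G = Old ` verts G \<union> {Sub u v | u v. {u, v} \<in> edges G \<and> u \<noteq> v}
     \<union> {Leaf v i | v i. v \<in> verts G \<and> i < s - degree G v}"

text \<open>H is (an isomorphic copy of) the result of applying the Vicsek operation V_s to G:
  the labels are realised injectively by vertices of H via phi.\<close>
definition vicsek_step :: "nat \<Rightarrow> 'a graph \<Rightarrow> 'a graph \<Rightarrow> bool" where
  "vicsek_step s G H \<longleftrightarrow> (\<exists>\<phi>. inj_on \<phi> (vicsek_labels s G) \<and>
     verts H = \<phi> ` vicsek_labels s G \<and>
     edges H =
       {{\<phi> (Old u), \<phi> (Sub u v)} | u v. {u, v} \<in> edges G \<and> u \<noteq> v}
       \<union> {{\<phi> (Sub u v), \<phi> (Sub v u)} | u v. {u, v} \<in> edges G \<and> u \<noteq> v}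
       \<union> {{\<phi> (Old v), \<phi> (Leaf v i)} | v i. v \<in> verts G \<and> i < s - degree G v})"

end

theory Submission
  imports Defs
begin

text \<open>Every vertex of V_s(G) lies in the star of exactly one original vertex c, formed by c
  and its s neighbours, and distances between original vertices are exactly tripled. In a tree,
  all neighbours of c are one step farther from a fixed vertex x than c is, except the one
  neighbour on the path towards x (if x is not c itself). Hence summing the distances to x over
  the star of c gives (s + 1) d(c, x) + s - 2, plus 2 when x = c. Using this once for each
  argument of the distance gives the recurrence
  W(V_s G) = 3 (s + 1)^2 W(G) + (s - 2)(s + 1) n^2 + (s + 2) n with n = |G| and |V_s G| = (s + 1) n,
  whose solution is the stated formula. Distances are computed via level functions (breadth-first
  layerings with unique parents); a tree has one for every root, and this property is preserved by
  the operation.\<close>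

section \<open>Walks and distances\<close>

lemma walk_Nil [simp]: "\<not> walk G []"
  by (simp add: walk_def)

lemma walk_singleton [simp]: "walk G [x] \<longleftrightarrow> x \<in> verts G"
  by (simp add: walk_def)

lemma walk_Cons_Cons [simp]:
  "walk G (x # y # xs) \<longleftrightarrow> x \<in> verts G \<and> {x, y} \<in> edges G \<and> walk G (y # xs)"
  by (auto simp: walk_def All_less_Suc2 simp del: nth_Cons_Suc)

lemma walk_Cons: "walk G ys \<Longrightarrow> x \<in> verts G \<Longrightarrow> {x, hd ys} \<in> edges G \<Longrightarrow> walk G (x # ys)"
  by (cases ys) auto

lemma walk_append:
  "walk G xs \<Longrightarrow> walk G ys \<Longrightarrow> {last xs, hd ys} \<in> edges G \<Longrightarrow> walk G (xs @ ys)"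
  by (induction xs rule: induct_list012) (auto intro: walk_Cons)

lemma walk_rev: "walk G xs \<Longrightarrow> walk G (rev xs)"
proof (induction xs rule: induct_list012)
  case (3 x y zs)
  then have "walk G (rev (y # zs) @ [x])"
    by (intro walk_append) (auto simp: insert_commute)
  then show ?case
    by simp
qed auto

lemma walk_take: "walk G xs \<Longrightarrow> 0 < n \<Longrightarrow> walk G (take n xs)"
proof (induction xs arbitrary: n rule: induct_list012)
  case (3 x y zs)
  then consider "n = 1" | k where "n = Suc (Suc k)"
    by (metis One_nat_def gr0_conv_Suc not0_implies_Suc)
  then show ?case
    using 3 by cases (use "3.IH"(2)[of "Suc k" for k] in auto)
qed auto

lemma walk_nth_edge: "walk G xs \<Longrightarrow> Suc i < length xs \<Longrightarrow> {xs ! i, xs ! Suc i} \<in> edges G"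
  by (simp add: walk_def)

lemma gdist_le_length:
  assumes "walk G xs" "hd xs = u" "last xs = v"
  shows "gdist G u v \<le> length xs - 1"
  unfolding gdist_def
  by (rule Least_le) (use assms in \<open>cases xs; auto\<close>)

lemma shortest_walk_exists:
  assumes "walk G xs" "hd xs = u" "last xs = v"
  obtains ys where "walk G ys" "hd ys = u" "last ys = v" "length ys = Suc (gdist G u v)"
proof -
  have "\<exists>ys. walk G ys \<and> hd ys = u \<and> last ys = v \<and> length ys = Suc (length xs - 1)"
    using assms by (cases xs) auto
  then have "\<exists>ys. walk G ys \<and> hd ys = u \<and> last ys = v \<and> length ys = Suc (gdist G u v)"
    unfolding gdist_def by (rule LeastI)
  then show ?thesis
    using that by blast
qed

lemma gdist_commute: "gdist G u v = gdist G v u"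
proof -
  have "walk G (rev xs) \<and> hd (rev xs) = v \<and> last (rev xs) = u \<and> length (rev xs) = Suc k"
    if "walk G xs \<and> hd xs = u \<and> last xs = v \<and> length xs = Suc k" for xs u v k
    using that walk_rev[of G xs] by (cases xs) (auto simp: hd_rev last_rev)
  then have "(\<exists>xs. walk G xs \<and> hd xs = u \<and> last xs = v \<and> length xs = Suc k) \<longleftrightarrow>
      (\<exists>xs. walk G xs \<and> hd xs = v \<and> last xs = u \<and> length xs = Suc k)" for k
    by (metis rev_rev_ident)
  then show ?thesis
    unfolding gdist_def by simp
qed

lemma simple_graph_edgeD:
  assumes "simple_graph G" "{a, b} \<in> edges G"
  shows "a \<in> verts G" "b \<in> verts G" "a \<noteq> b"
  using assms unfolding simple_graph_def by (auto simp: doubleton_eq_iff)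

lemma degree_eq_card_neighbours:
  assumes "simple_graph G"
  shows "degree G v = card {y. {v, y} \<in> edges G}"
proof -
  have "{e \<in> edges G. v \<in> e} = (\<lambda>y. {v, y}) ` {y. {v, y} \<in> edges G}"
  proof (intro equalityI subsetI)
    fix e assume e: "e \<in> {e \<in> edges G. v \<in> e}"
    then obtain a b where "e = {a, b}"
      using assms unfolding simple_graph_def by blast
    with e have "e = {v, b} \<or> e = {v, a}"
      by (auto simp: insert_commute)
    with e show "e \<in> (\<lambda>y. {v, y}) ` {y. {v, y} \<in> edges G}"
      by auto
  qed auto
  moreover have "inj_on (\<lambda>y. {v, y}) {y. {v, y} \<in> edges G}"
    by (rule inj_onI) (auto simp: doubleton_eq_iff)
  ultimately show ?thesis
    unfolding degree_def by (simp add: card_image)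
qed

lemma wiener_eq_sum: "2 * wiener G = (\<Sum>x\<in>verts G. \<Sum>y\<in>verts G. real (gdist G y x))"
  unfolding wiener_def by (subst sum.swap) simp

section \<open>Level functions\<close>

text \<open>The unique-parent condition is what makes this a tree property; by gdist_eq_level, f is
  then the distance to z.\<close>

definition level_function :: "'a graph \<Rightarrow> 'a \<Rightarrow> ('a \<Rightarrow> nat) \<Rightarrow> bool" where
  "level_function G z f \<longleftrightarrow> z \<in> verts G \<and> f z = 0 \<and>
     (\<forall>a b. {a, b} \<in> edges G \<longrightarrow> f a = Suc (f b) \<or> f b = Suc (f a)) \<and>
     (\<forall>x\<in>verts G. x \<noteq> z \<longrightarrow> (\<exists>!y. {x, y} \<in> edges G \<and> Suc (f y) = f x))"

lemma level_functionD:
  assumes "level_function G z f"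
  shows "z \<in> verts G" "f z = 0"
    "{a, b} \<in> edges G \<Longrightarrow> f a = Suc (f b) \<or> f b = Suc (f a)"
    "x \<in> verts G \<Longrightarrow> x \<noteq> z \<Longrightarrow> \<exists>!y. {x, y} \<in> edges G \<and> Suc (f y) = f x"
  using assms unfolding level_function_def by blast+

lemma level_function_eq_0_iff:
  assumes "level_function G z f" "x \<in> verts G"
  shows "f x = 0 \<longleftrightarrow> x = z"
  using level_functionD[OF assms(1)] assms(2) by fastforce

lemma level_function_walk_to_root:
  assumes "simple_graph G" "level_function G z f" "x \<in> verts G"
  shows "\<exists>xs. walk G xs \<and> hd xs = x \<and> last xs = z \<and> length xs = Suc (f x)"
  using assms(3)
proof (induction "f x" arbitrary: x)
  case 0
  then show ?case
    using level_function_eq_0_iff[OF assms(2)] by (intro exI[of _ "[x]"]) auto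
next
  case (Suc k)
  then have "x \<noteq> z"
    using level_functionD(2)[OF assms(2)] by auto
  then obtain y where y: "{x, y} \<in> edges G" "Suc (f y) = f x"
    using level_functionD(4)[OF assms(2) Suc.prems] by blast
  moreover from y obtain ys where "walk G ys" "hd ys = y" "last ys = z" "length ys = Suc (f y)"
    using Suc simple_graph_edgeD[OF assms(1) y(1)] by (metis Suc_inject)
  ultimately show ?case
    using Suc.prems by (intro exI[of _ "x # ys"]) (auto intro: walk_Cons)
qed

lemma level_function_le_walk_length:
  "level_function G z f \<Longrightarrow> walk G xs \<Longrightarrow> last xs = z \<Longrightarrow> f (hd xs) \<le> length xs - 1"
proof (induction xs rule: induct_list012)
  case (3 x y zs)
  then show ?case
    using level_functionD(3)[OF "3.prems"(1), of x y] by auto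
qed (auto simp: level_function_def)

lemma gdist_eq_level:
  assumes "simple_graph G" "level_function G z f" "x \<in> verts G"
  shows "gdist G x z = f x"
proof (rule antisym)
  obtain xs where xs: "walk G xs" "hd xs = x" "last xs = z" "length xs = Suc (f x)"
    using level_function_walk_to_root[OF assms] by blast
  then show "gdist G x z \<le> f x"
    using gdist_le_length by fastforce
  obtain ys where "walk G ys" "hd ys = x" "last ys = z" "length ys = Suc (gdist G x z)"
    using shortest_walk_exists[OF xs(1-3)] .
  then show "f x \<le> gdist G x z"
    using level_function_le_walk_length[OF assms(2)] by fastforce
qed

lemma level_function_cong:
  assumes "simple_graph G" "level_function G z f" "\<And>x. x \<in> verts G \<Longrightarrow> f x = f' x"
  shows "level_function G z f'"
proof -
  have "f a = f' a \<and> f b = f' b" if "{a, b} \<in> edges G" for a b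
    using assms(3) simple_graph_edgeD[OF assms(1) that] by simp
  then show ?thesis
    using assms(2) unfolding level_function_def
    by (metis (no_types, lifting) assms(3))
qed

text \<open>Re-rooting a level function at a neighbour b of the root a: the levels of the vertices in
  the subtree hanging from b decrease by one, all others increase by one.\<close>

locale rerooting =
  fixes G :: "'a graph" and a b :: 'a and g :: "'a \<Rightarrow> nat"
  assumes simple: "simple_graph G" and level: "level_function G a g" and edge: "{a, b} \<in> edges G"
begin

inductive in_subtree :: "'a \<Rightarrow> bool" where
  root: "in_subtree b"
| child: "{x, y} \<in> edges G \<Longrightarrow> Suc (g y) = g x \<Longrightarrow> in_subtree y \<Longrightarrow> in_subtree x"

definition rerooted :: "'a \<Rightarrow> nat" where
  "rerooted x = (if in_subtree x then g x - 1 else Suc (g x))"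

lemma g_a: "g a = 0" and g_b: "g b = 1"
  using level_functionD(2)[OF level] level_functionD(3)[OF level edge] by auto

lemma parent_of_b: "{b, y} \<in> edges G \<Longrightarrow> Suc (g y) = g b \<Longrightarrow> y = a"
  using level_function_eq_0_iff[OF level] simple_graph_edgeD[OF simple] g_b by fastforce

lemma in_subtree_pos: "in_subtree x \<Longrightarrow> 1 \<le> g x"
  by (induction rule: in_subtree.induct) (auto simp: g_b)

lemma in_subtree_parent_iff:
  assumes "x \<noteq> b" "{x, y} \<in> edges G" "Suc (g y) = g x"
  shows "in_subtree x \<longleftrightarrow> in_subtree y"
proof
  have x: "x \<in> verts G" "x \<noteq> a"
    using simple_graph_edgeD[OF simple assms(2)] assms(3) g_a by auto
  assume "in_subtree x"
  then obtain y' where "{x, y'} \<in> edges G" "Suc (g y') = g x" "in_subtree y'"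
    using assms(1) by (cases rule: in_subtree.cases) auto
  then show "in_subtree y"
    using level_functionD(4)[OF level x] assms(2,3) by metis
qed (use assms in \<open>auto intro: child\<close>)

lemma rerooted_parent_edge:
  assumes "{x, y} \<in> edges G" "Suc (g y) = g x"
  shows "x \<noteq> b \<Longrightarrow> Suc (rerooted y) = rerooted x"
    and "x = b \<Longrightarrow> y = a \<and> Suc (rerooted x) = rerooted y"
proof -
  assume "x \<noteq> b"
  then show "Suc (rerooted y) = rerooted x"
    using in_subtree_parent_iff[OF _ assms] in_subtree_pos[of y] assms(2) unfolding rerooted_def by auto
next
  assume "x = b"
  then have "y = a"
    using parent_of_b assms by blast
  then show "y = a \<and> Suc (rerooted x) = rerooted y"
    using \<open>x = b\<close> g_a g_b in_subtree_pos[of a] unfolding rerooted_def by (auto intro: root)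
qed

lemma rerooted_parent_iff:
  assumes "x \<noteq> b" "{x, y} \<in> edges G"
  shows "Suc (rerooted y) = rerooted x \<longleftrightarrow> Suc (g y) = g x \<or> (x = a \<and> y = b)"
proof (cases "Suc (g y) = g x")
  case True
  then show ?thesis
    using rerooted_parent_edge(1)[OF assms(2) True assms(1)] by simp
next
  case False
  then have yx: "{y, x} \<in> edges G" "Suc (g x) = g y"
    using level_functionD(3)[OF level assms(2)] assms(2) by (auto simp: insert_commute)
  show ?thesis
  proof (cases "y = b")
    case True
    then show ?thesis
      using rerooted_parent_edge(2)[OF yx] by auto
  next
    case False
    then show ?thesis
      using rerooted_parent_edge(1)[OF yx] g_b yx(2) by auto
  qed
qed

lemma rerooted_edge:
  assumes e: "{x, y} \<in> edges G"
  shows "rerooted x = Suc (rerooted y) \<or> rerooted y = Suc (rerooted x)"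
proof -
  have e': "{y, x} \<in> edges G"
    using e by (simp add: insert_commute)
  consider "Suc (g y) = g x" | "Suc (g x) = g y"
    using level_functionD(3)[OF level e] by auto
  then show ?thesis
  proof cases
    case 1
    then show ?thesis
      using rerooted_parent_edge[OF e] by (cases "x = b") auto
  next
    case 2
    then show ?thesis
      using rerooted_parent_edge[OF e'] by (cases "y = b") auto
  qed
qed

lemma rerooted_unique_parent:
  assumes x: "x \<in> verts G" "x \<noteq> b"
  shows "\<exists>!y. {x, y} \<in> edges G \<and> Suc (rerooted y) = rerooted x"
proof (cases "x = a")
  case True
  show ?thesis
  proof (rule ex1I[of _ b])
    show "{x, b} \<in> edges G \<and> Suc (rerooted b) = rerooted x"
      using rerooted_parent_iff[OF x(2) edge[folded True]] True edge by simp
  next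
    fix y assume "{x, y} \<in> edges G \<and> Suc (rerooted y) = rerooted x"
    then show "y = b"
      using rerooted_parent_iff[OF x(2)] True g_a by auto
  qed
next
  case False
  then obtain p where p: "{x, p} \<in> edges G" "Suc (g p) = g x"
    and p_unique: "\<And>y. {x, y} \<in> edges G \<and> Suc (g y) = g x \<Longrightarrow> y = p"
    using level_functionD(4)[OF level x(1)] by metis
  show ?thesis
  proof (rule ex1I[of _ p])
    show "{x, p} \<in> edges G \<and> Suc (rerooted p) = rerooted x"
      using rerooted_parent_iff[OF x(2) p(1)] p by simp
  next
    fix y assume "{x, y} \<in> edges G \<and> Suc (rerooted y) = rerooted x"
    then show "y = p"
      using rerooted_parent_iff[OF x(2)] False p_unique by auto
  qed
qed

lemma level_function_rerooted: "level_function G b rerooted"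
  unfolding level_function_def
proof (intro conjI allI impI ballI)
  show "b \<in> verts G"
    using simple_graph_edgeD(2)[OF simple edge] .
  show "rerooted b = 0"
    using g_b by (simp add: rerooted_def root)
qed (simp_all add: rerooted_edge rerooted_unique_parent)

end

lemma level_function_exists:
  assumes "simple_graph G" "level_function G r g" "z \<in> verts G"
  shows "\<exists>f. level_function G z f"
  using assms(3)
proof (induction "g z" arbitrary: z)
  case 0
  then have "z = r"
    using level_function_eq_0_iff[OF assms(2)] by simp
  then show ?case
    using assms(2) by blast
next
  case (Suc k)
  then have "z \<noteq> r"
    using level_functionD(2)[OF assms(2)] by auto
  then obtain y where y: "{z, y} \<in> edges G" "Suc (g y) = g z"
    using level_functionD(4)[OF assms(2) Suc.prems] by blast
  then obtain f where "level_function G y f"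
    using Suc simple_graph_edgeD[OF assms(1) y(1)] by (metis Suc_inject)
  then have "rerooting G y z f"
    using assms(1) y(1) by unfold_locales (simp_all add: insert_commute)
  then show ?case
    using rerooting.level_function_rerooted by fast
qed

text \<open>Holds for trees (tree_like_if_tree) and, unlike acyclicity, is easy to transport along the
  Vicsek operation.\<close>

definition tree_like :: "'a graph \<Rightarrow> bool" where
  "tree_like G \<longleftrightarrow> simple_graph G \<and> (\<exists>r g. level_function G r g)"

lemma tree_like_level_gdist:
  assumes "tree_like G" "z \<in> verts G"
  shows "level_function G z (\<lambda>x. gdist G x z)"
proof -
  obtain r g where G: "simple_graph G" "level_function G r g"
    using assms(1) unfolding tree_like_def by blast
  then obtain f where f: "level_function G z f"
    using level_function_exists[OF G assms(2)] by blast
  show ?thesis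
    by (rule level_function_cong[OF G(1) f]) (simp add: gdist_eq_level[OF G(1) f])
qed

lemma level_function_neighbour_sum:
  assumes f: "level_function G z f" and w: "w \<in> verts G" and fin: "finite {y. {w, y} \<in> edges G}"
  shows "(\<Sum>y | {w, y} \<in> edges G. real (f y))
    = real (card {y. {w, y} \<in> edges G}) * (real (f w) + 1) - 2 + (if w = z then 2 else 0)"
proof (cases "w = z")
  case True
  then have "f y = 1" if "{w, y} \<in> edges G" for y
    using level_functionD(2)[OF f] level_functionD(3)[OF f that] by auto
  then show ?thesis
    using True level_functionD(2)[OF f] by simp
next
  case False
  let ?N = "{y. {w, y} \<in> edges G}"
  obtain p where p: "{w, p} \<in> edges G" "Suc (f p) = f w"
    and p_unique: "\<And>y. {w, y} \<in> edges G \<and> Suc (f y) = f w \<Longrightarrow> y = p"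
    using level_functionD(4)[OF f w False] by metis
  have children: "f y = Suc (f w)" if "y \<in> ?N - {p}" for y
    using that p_unique level_functionD(3)[OF f, of w y] by auto
  have "(\<Sum>y\<in>?N. real (f y)) = real (f p) + (\<Sum>y\<in>?N - {p}. real (f y))"
    using sum.remove[OF fin] p(1) by simp
  also have "\<dots> = real (f w) - 1 + real (card ?N - 1) * (real (f w) + 1)"
    using children fin p(1) arg_cong[OF p(2), of real] by (simp add: algebra_simps)
  also have "\<dots> = real (card ?N) * (real (f w) + 1) - 2"
  proof -
    have "card ?N \<ge> 1"
      using fin p(1) card_gt_0_iff[of ?N] by force
    then show ?thesis
      by (simp add: of_nat_diff algebra_simps)
  qed
  finally show ?thesis
    using False by simp
qed

section \<open>Trees\<close>

lemma has_cycle_if_two_paths: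
  assumes P: "walk G P" "distinct P" and Q: "walk G Q" "distinct Q"
    and meet: "last P = last Q" and heads: "hd P \<notin> set Q" "hd Q \<notin> set P"
    and edge: "{hd P, hd Q} \<in> edges G"
  shows "has_cycle G"
proof -
  have "P \<noteq> []" "Q \<noteq> []"
    using P(1) Q(1) by auto
  have "\<exists>i<length P. P ! i \<in> set Q"
    using meet \<open>P \<noteq> []\<close> \<open>Q \<noteq> []\<close>
    by (intro exI[of _ "length P - 1"]) (simp add: last_conv_nth[symmetric] del: One_nat_def)
  then obtain i where i: "i < length P" "P ! i \<in> set Q"
    and before_i: "\<forall>k<i. \<not> (k < length P \<and> P ! k \<in> set Q)"
    unfolding exists_least_iff[of "\<lambda>i. i < length P \<and> P ! i \<in> set Q"] by blast
  obtain j where j: "j < length Q" "Q ! j = P ! i"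
    using i(2) by (auto simp: in_set_conv_nth)
  have "i \<noteq> 0"
    using heads(1) i(2) \<open>P \<noteq> []\<close> by (metis hd_conv_nth)
  have "j \<noteq> 0"
    using heads(2) i(1) j(2) \<open>Q \<noteq> []\<close> by (metis hd_conv_nth nth_mem)
  then obtain j' where j': "j = Suc j'"
    using not0_implies_Suc by blast
  text \<open>The cycle runs along P to its first vertex on Q and returns along Q.\<close>
  define C where "C = take (Suc i) P @ rev (take j Q)"
  have "{last (take (Suc i) P), hd (rev (take j Q))} \<in> edges G"
    using walk_nth_edge[OF Q(1), of j'] i j j' by (simp add: take_Suc_conv_app_nth insert_commute)
  then have "walk G C"
    unfolding C_def using \<open>j \<noteq> 0\<close> by (intro walk_append walk_take walk_rev P(1) Q(1)) auto
  moreover have "set (take (Suc i) P) \<inter> set (take j Q) = {}"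
  proof -
    have "set (take i P) \<inter> set Q = {}"
      using before_i i(1) by (auto simp: in_set_conv_nth)
    moreover have "P ! i \<notin> set (take j Q)"
      using distinct_take[OF Q(2), of "Suc j"] j by (simp add: take_Suc_conv_app_nth)
    ultimately show ?thesis
      using i(1) set_take_subset[of j Q] by (auto simp: take_Suc_conv_app_nth)
  qed
  then have "distinct C"
    unfolding C_def using P(2) Q(2) by (simp add: distinct_take)
  moreover have "length C \<ge> 3"
    unfolding C_def using i(1) j(1) \<open>i \<noteq> 0\<close> \<open>j \<noteq> 0\<close> by simp
  moreover have "{last C, hd C} \<in> edges G"
    unfolding C_def using edge \<open>P \<noteq> []\<close> \<open>Q \<noteq> []\<close> \<open>j \<noteq> 0\<close> j(1)
    by (cases P; cases Q; cases j) (auto simp: last_rev insert_commute)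
  ultimately show ?thesis
    unfolding has_cycle_def by blast
qed

definition geodesic :: "'a graph \<Rightarrow> 'a \<Rightarrow> 'a list \<Rightarrow> bool" where
  "geodesic G r P \<longleftrightarrow> walk G P \<and> last P = r \<and>
     (\<forall>i<length P. gdist G (P ! i) r + i = gdist G (hd P) r)"

lemma geodesic_distinct: "geodesic G r P \<Longrightarrow> distinct P"
  unfolding geodesic_def distinct_conv_nth by (metis add_left_cancel)

lemma geodesic_gdist_less:
  assumes "geodesic G r P" "y \<in> set P" "y \<noteq> hd P"
  shows "gdist G y r < gdist G (hd P) r"
proof -
  obtain j where j: "j < length P" "P ! j = y"
    using assms(2) by (auto simp: in_set_conv_nth)
  moreover have "j \<noteq> 0"
    using j assms(3) hd_conv_nth[of P] by (metis length_greater_0_conv less_nat_zero_code)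
  ultimately show ?thesis
    using assms(1) unfolding geodesic_def by (metis less_add_same_cancel1 not_gr0)
qed

lemma geodesic_Cons:
  assumes "geodesic G r P" "x \<in> verts G" "{x, hd P} \<in> edges G" "Suc (gdist G (hd P) r) = gdist G x r"
  shows "geodesic G r (x # P)"
proof -
  have "P \<noteq> []"
    using assms(1) unfolding geodesic_def by auto
  then show ?thesis
    using assms unfolding geodesic_def by (auto intro: walk_Cons simp: less_Suc_eq_0_disj)
qed

context
  fixes G :: "'a graph" and r :: 'a
  assumes simple: "simple_graph G" and connected: "connected_graph G" and root: "r \<in> verts G"
begin

lemma shortest_walk_to_root:
  assumes "x \<in> verts G"
  obtains xs where "walk G xs" "hd xs = x" "last xs = r" "length xs = Suc (gdist G x r)"
  using connected assms root shortest_walk_exists unfolding connected_graph_def by metis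

lemma gdist_edge_le:
  assumes "{x, y} \<in> edges G"
  shows "gdist G x r \<le> Suc (gdist G y r)"
proof -
  obtain ys where ys: "walk G ys" "hd ys = y" "last ys = r" "length ys = Suc (gdist G y r)"
    using shortest_walk_to_root simple_graph_edgeD[OF simple assms] by metis
  then have "walk G (x # ys)"
    using simple_graph_edgeD[OF simple assms] assms by (intro walk_Cons) auto
  then show ?thesis
    using gdist_le_length[of G "x # ys" x r] ys by (cases ys) auto
qed

lemma gdist_to_root_eq_0_iff:
  assumes "x \<in> verts G"
  shows "gdist G x r = 0 \<longleftrightarrow> x = r"
proof
  show "gdist G x r = 0 \<Longrightarrow> x = r"
    using shortest_walk_to_root[OF assms] by (metis One_nat_def last_ConsL length_0_conv length_Suc_conv list.sel(1))
  show "x = r \<Longrightarrow> gdist G x r = 0"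
    using gdist_le_length[of G "[r]" r r] root by simp
qed

lemma gdist_parent_exists:
  assumes "x \<in> verts G" "x \<noteq> r"
  obtains y where "{x, y} \<in> edges G" "Suc (gdist G y r) = gdist G x r"
proof -
  obtain xs where xs: "walk G xs" "hd xs = x" "last xs = r" "length xs = Suc (gdist G x r)"
    using shortest_walk_to_root[OF assms(1)] .
  then obtain y ys where xs_eq: "xs = x # y # ys"
    using assms(2) by (metis last_ConsL list.collapse list.sel(1) walk_Nil)
  then have "gdist G y r \<le> length (y # ys) - 1"
    using xs by (intro gdist_le_length) auto
  moreover have "{x, y} \<in> edges G"
    using xs(1) xs_eq by simp
  moreover from this have "gdist G x r \<le> Suc (gdist G y r)"
    by (rule gdist_edge_le)
  ultimately show ?thesis
    using that xs(4) xs_eq by simp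
qed

lemma geodesic_exists:
  assumes "x \<in> verts G"
  shows "\<exists>P. geodesic G r P \<and> hd P = x"
  using assms
proof (induction "gdist G x r" arbitrary: x)
  case 0
  then have "geodesic G r [x]"
    using gdist_to_root_eq_0_iff unfolding geodesic_def by simp
  then show ?case
    by force
next
  case (Suc k)
  then have "x \<noteq> r"
    using gdist_to_root_eq_0_iff by force
  then obtain y where y: "{x, y} \<in> edges G" "Suc (gdist G y r) = gdist G x r"
    using gdist_parent_exists Suc.prems by blast
  then obtain P where "geodesic G r P" "hd P = y"
    using Suc simple_graph_edgeD[OF simple y(1)] by (metis Suc_inject)
  then show ?case
    using geodesic_Cons Suc.prems y by (metis list.sel(1))
qed

end

context
  fixes T :: "'a graph" and r :: 'a
  assumes tree: "is_tree T" and root: "r \<in> verts T"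
begin

lemma tree_simple: "simple_graph T" and tree_connected: "connected_graph T"
  using tree unfolding is_tree_def by simp_all

lemma tree_no_shortcut:
  assumes edge: "{x, y} \<in> edges T" and closer: "gdist T y r \<le> gdist T x r"
    and P: "geodesic T r P" "hd P = x" "y \<notin> set P"
  shows False
proof -
  have "x \<noteq> y" "y \<in> verts T"
    using simple_graph_edgeD[OF tree_simple edge] by simp_all
  obtain Q where Q: "geodesic T r Q" "hd Q = y"
    using geodesic_exists[OF tree_simple tree_connected root \<open>y \<in> verts T\<close>] by blast
  have "x \<notin> set Q"
    using geodesic_gdist_less[OF Q(1), of x] closer Q(2) \<open>x \<noteq> y\<close> by fastforce
  moreover have "walk T P" "walk T Q" "last P = last Q"
    using P(1) Q(1) unfolding geodesic_def by simp_all
  ultimately have "has_cycle T"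
    using has_cycle_if_two_paths[of T P Q] geodesic_distinct[OF P(1)] geodesic_distinct[OF Q(1)]
      P(2,3) Q(2) edge by simp
  then show False
    using tree unfolding is_tree_def by simp
qed

lemma gdist_edge_neq:
  assumes edge: "{x, y} \<in> edges T"
  shows "gdist T x r \<noteq> gdist T y r"
proof
  assume eq: "gdist T x r = gdist T y r"
  have "x \<noteq> y" "x \<in> verts T"
    using simple_graph_edgeD[OF tree_simple edge] by simp_all
  obtain P where P: "geodesic T r P" "hd P = x"
    using geodesic_exists[OF tree_simple tree_connected root \<open>x \<in> verts T\<close>] by blast
  then have "y \<notin> set P"
    using geodesic_gdist_less[OF P(1), of y] eq \<open>x \<noteq> y\<close> by fastforce
  then show False
    using tree_no_shortcut[OF edge _ P(1,2)] eq by simp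
qed

lemma gdist_parent_unique:
  assumes edges: "{x, y} \<in> edges T" "{x, y'} \<in> edges T"
    and parents: "Suc (gdist T y r) = gdist T x r" "Suc (gdist T y' r) = gdist T x r"
  shows "y = y'"
proof (rule ccontr)
  assume "y \<noteq> y'"
  have "x \<in> verts T" "y \<in> verts T" "x \<noteq> y'"
    using simple_graph_edgeD[OF tree_simple edges(1)] simple_graph_edgeD[OF tree_simple edges(2)]
    by simp_all
  obtain P where P: "geodesic T r P" "hd P = y"
    using geodesic_exists[OF tree_simple tree_connected root \<open>y \<in> verts T\<close>] by blast
  then have "geodesic T r (x # P)"
    using geodesic_Cons[OF P(1) \<open>x \<in> verts T\<close>] edges(1) parents(1) by simp
  moreover have "y' \<notin> set (x # P)"
    using geodesic_gdist_less[OF P(1), of y'] parents P(2) \<open>y \<noteq> y'\<close> \<open>x \<noteq> y'\<close> by auto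
  moreover have "gdist T y' r \<le> gdist T x r"
    using parents(2) by simp
  ultimately show False
    using tree_no_shortcut[OF edges(2), of "x # P"] by simp
qed

lemma level_function_gdist_tree: "level_function T r (\<lambda>x. gdist T x r)"
  unfolding level_function_def
proof (intro conjI allI impI ballI)
  show "r \<in> verts T" "gdist T r r = 0"
    using gdist_to_root_eq_0_iff[OF tree_simple tree_connected root root] root by simp_all
next
  fix x y assume edge: "{x, y} \<in> edges T"
  then have "{y, x} \<in> edges T"
    by (simp add: insert_commute)
  then show "gdist T x r = Suc (gdist T y r) \<or> gdist T y r = Suc (gdist T x r)"
    using gdist_edge_le[OF tree_simple tree_connected root, of x y]
      gdist_edge_le[OF tree_simple tree_connected root, of y x] edge gdist_edge_neq[OF edge]
    by linarith
next
  fix x assume "x \<in> verts T" "x \<noteq> r"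
  then obtain y where "{x, y} \<in> edges T" "Suc (gdist T y r) = gdist T x r"
    using gdist_parent_exists[OF tree_simple tree_connected root] by blast
  then show "\<exists>!y. {x, y} \<in> edges T \<and> Suc (gdist T y r) = gdist T x r"
    using gdist_parent_unique by (intro ex1I[of _ y]) auto
qed

end

lemma tree_like_if_tree:
  assumes "is_tree T"
  shows "tree_like T"
proof -
  obtain r where "r \<in> verts T"
    using assms unfolding is_tree_def connected_graph_def by blast
  then show ?thesis
    using level_function_gdist_tree[OF assms] tree_simple[OF assms] unfolding tree_like_def by blast
qed

section \<open>The Vicsek operation\<close>

definition vicsek_adj :: "nat \<Rightarrow> 'a graph \<Rightarrow> 'a vlabel \<Rightarrow> 'a vlabel \<Rightarrow> bool" where
  "vicsek_adj s G a b \<longleftrightarrow>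
     (\<exists>u v. {u, v} \<in> edges G \<and> u \<noteq> v \<and>
        (a = Old u \<and> b = Sub u v \<or> a = Sub u v \<and> b = Old u \<or> a = Sub u v \<and> b = Sub v u)) \<or>
     (\<exists>v i. v \<in> verts G \<and> i < s - degree G v \<and> (a = Old v \<and> b = Leaf v i \<or> a = Leaf v i \<and> b = Old v))"

lemma vicsek_adj_Old:
  "vicsek_adj s G (Old w) y \<longleftrightarrow>
     (\<exists>v. {w, v} \<in> edges G \<and> w \<noteq> v \<and> y = Sub w v) \<or>
     (\<exists>i. w \<in> verts G \<and> i < s - degree G w \<and> y = Leaf w i)"
  unfolding vicsek_adj_def by blast

lemma vicsek_adj_Sub:
  "vicsek_adj s G (Sub w v) y \<longleftrightarrow> {w, v} \<in> edges G \<and> w \<noteq> v \<and> (y = Old w \<or> y = Sub v w)"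
  unfolding vicsek_adj_def by blast

lemma vicsek_adj_Leaf:
  "vicsek_adj s G (Leaf w i) y \<longleftrightarrow> w \<in> verts G \<and> i < s - degree G w \<and> y = Old w"
  unfolding vicsek_adj_def by blast

lemma vicsek_adj_sym: "vicsek_adj s G a b \<Longrightarrow> vicsek_adj s G b a"
  by (cases a) (auto simp: vicsek_adj_Old vicsek_adj_Sub vicsek_adj_Leaf insert_commute)

lemma vicsek_adj_irrefl: "vicsek_adj s G a b \<Longrightarrow> a \<noteq> b"
  unfolding vicsek_adj_def by auto

lemma vicsek_labels_iff [simp]:
  "Old w \<in> vicsek_labels s G \<longleftrightarrow> w \<in> verts G"
  "Sub u v \<in> vicsek_labels s G \<longleftrightarrow> {u, v} \<in> edges G \<and> u \<noteq> v"
  "Leaf v i \<in> vicsek_labels s G \<longleftrightarrow> v \<in> verts G \<and> i < s - degree G v"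
  unfolding vicsek_labels_def by auto

lemma vicsek_adj_in_labels:
  assumes "simple_graph G" "vicsek_adj s G a b"
  shows "a \<in> vicsek_labels s G" "b \<in> vicsek_labels s G"
  using assms(2) simple_graph_edgeD[OF assms(1)] unfolding vicsek_adj_def
  by (auto simp: insert_commute)

lemma vicsek_step_edges:
  assumes "vicsek_step s G H"
  obtains \<phi> where "inj_on \<phi> (vicsek_labels s G)" "verts H = \<phi> ` vicsek_labels s G"
    "edges H = {{\<phi> a, \<phi> b} | a b. vicsek_adj s G a b}"
proof -
  obtain \<phi> where \<phi>: "inj_on \<phi> (vicsek_labels s G)" "verts H = \<phi> ` vicsek_labels s G"
    and E: "edges H =
       {{\<phi> (Old u), \<phi> (Sub u v)} | u v. {u, v} \<in> edges G \<and> u \<noteq> v}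
       \<union> {{\<phi> (Sub u v), \<phi> (Sub v u)} | u v. {u, v} \<in> edges G \<and> u \<noteq> v}
       \<union> {{\<phi> (Old v), \<phi> (Leaf v i)} | v i. v \<in> verts G \<and> i < s - degree G v}"
    using assms unfolding vicsek_step_def by (elim exE conjE) (rule that)
  have "edges H = {{\<phi> a, \<phi> b} | a b. vicsek_adj s G a b}"
  proof (intro equalityI subsetI)
    fix e assume "e \<in> edges H"
    then show "e \<in> {{\<phi> a, \<phi> b} | a b. vicsek_adj s G a b}"
      unfolding E vicsek_adj_def by blast
  next
    fix e assume "e \<in> {{\<phi> a, \<phi> b} | a b. vicsek_adj s G a b}"
    then obtain a b where e: "e = {\<phi> a, \<phi> b}" and "vicsek_adj s G a b"
      by blast
    then consider
        (old_sub) u v where "{u, v} \<in> edges G" "u \<noteq> v"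
          "a = Old u \<and> b = Sub u v \<or> a = Sub u v \<and> b = Old u"
      | (sub_sub) u v where "{u, v} \<in> edges G" "u \<noteq> v" "a = Sub u v" "b = Sub v u"
      | (leaf) v i where "v \<in> verts G" "i < s - degree G v"
          "a = Old v \<and> b = Leaf v i \<or> a = Leaf v i \<and> b = Old v"
      unfolding vicsek_adj_def by blast
    then show "e \<in> edges H"
    proof cases
      case old_sub
      then have "e = {\<phi> (Old u), \<phi> (Sub u v)}"
        unfolding e by (auto simp: insert_commute)
      then show ?thesis
        unfolding E using old_sub by blast
    next
      case sub_sub
      then show ?thesis
        unfolding E e by blast
    next
      case leaf
      then have "e = {\<phi> (Old v), \<phi> (Leaf v i)}"
        unfolding e by (auto simp: insert_commute)
      then show ?thesis
        unfolding E using leaf by blast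
    qed
  qed
  with \<phi> show ?thesis
    using that by blast
qed

fun vlabel_base :: "'a vlabel \<Rightarrow> 'a" where
  "vlabel_base (Old w) = w"
| "vlabel_base (Sub w v) = w"
| "vlabel_base (Leaf w i) = w"

text \<open>The distances to an original vertex c in V_s(G), given the distances D to c in G.\<close>

fun subdivided_level :: "('a \<Rightarrow> nat) \<Rightarrow> 'a vlabel \<Rightarrow> nat" where
  "subdivided_level D (Old w) = 3 * D w"
| "subdivided_level D (Sub w v) = (if D v < D w then 3 * D w - 1 else 3 * D w + 1)"
| "subdivided_level D (Leaf w i) = 3 * D w + 1"

lemma subdivided_level_adj:
  assumes D: "level_function G c D" and "vicsek_adj s G a b"
  shows "subdivided_level D a = Suc (subdivided_level D b) \<or> subdivided_level D b = Suc (subdivided_level D a)"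
proof -
  consider
      u v where "{u, v} \<in> edges G"
        "a = Old u \<and> b = Sub u v \<or> a = Sub u v \<and> b = Old u \<or> a = Sub u v \<and> b = Sub v u"
    | v i where "a = Old v \<and> b = Leaf v i \<or> a = Leaf v i \<and> b = Old v"
    using assms(2) unfolding vicsek_adj_def by blast
  then show ?thesis
  proof cases
    case (1 u v)
    then show ?thesis
      using level_functionD(3)[OF D 1(1)] by auto
  qed auto
qed

lemma subdivided_level_unique_parent:
  assumes G: "simple_graph G" and D: "level_function G c D"
    and x: "x \<in> vicsek_labels s G" "x \<noteq> Old c"
  shows "\<exists>!y. vicsek_adj s G x y \<and> Suc (subdivided_level D y) = subdivided_level D x"
proof (cases x)
  case (Old w)
  then have w: "w \<in> verts G" "w \<noteq> c"
    using x by auto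
  then obtain p where p: "{w, p} \<in> edges G" "Suc (D p) = D w"
    and p_unique: "\<And>v. {w, v} \<in> edges G \<and> Suc (D v) = D w \<Longrightarrow> v = p"
    using level_functionD(4)[OF D] by metis
  show ?thesis
  proof (rule ex1I[of _ "Sub w p"])
    show "vicsek_adj s G x (Sub w p) \<and> Suc (subdivided_level D (Sub w p)) = subdivided_level D x"
      using Old p simple_graph_edgeD[OF G p(1)] by (auto simp: vicsek_adj_Old)
  next
    fix y assume "vicsek_adj s G x y \<and> Suc (subdivided_level D y) = subdivided_level D x"
    then obtain v where v: "{w, v} \<in> edges G" "y = Sub w v" "D v < D w"
      using Old by (auto simp: vicsek_adj_Old split: if_splits)
    then have "Suc (D v) = D w"
      using level_functionD(3)[OF D v(1)] by auto
    then show "y = Sub w p"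
      using p_unique v by blast
  qed
next
  case (Sub w v)
  then have "{w, v} \<in> edges G" "w \<noteq> v"
    using x by auto
  then show ?thesis
    using Sub level_functionD(3)[OF D, of w v] by (auto simp: vicsek_adj_Sub)
next
  case (Leaf w i)
  then show ?thesis
    using x by (auto simp: vicsek_adj_Leaf)
qed

locale vicsek_image =
  fixes s :: nat and G H :: "'a graph" and \<phi> :: "'a vlabel \<Rightarrow> 'a"
  assumes tree_like_G: "tree_like G" and s_ge_2: "2 \<le> s"
    and degree_G: "\<forall>v\<in>verts G. degree G v \<le> s"
    and inj: "inj_on \<phi> (vicsek_labels s G)"
    and verts_H: "verts H = \<phi> ` vicsek_labels s G"
    and edges_H: "edges H = {{\<phi> a, \<phi> b} | a b. vicsek_adj s G a b}"
begin

abbreviation L :: "'a vlabel set" where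
  "L \<equiv> vicsek_labels s G"

abbreviation adj :: "'a vlabel \<Rightarrow> 'a vlabel \<Rightarrow> bool" where
  "adj \<equiv> vicsek_adj s G"

lemma simple_G: "simple_graph G"
  using tree_like_G unfolding tree_like_def by simp

lemma finite_verts_G: "finite (verts G)"
  using simple_G unfolding simple_graph_def by simp

lemma adj_in_L: "adj a b \<Longrightarrow> a \<in> L \<and> b \<in> L"
  using vicsek_adj_in_labels[OF simple_G] by blast

lemma finite_L: "finite L"
proof -
  have "L \<subseteq> Old ` verts G \<union> case_prod Sub ` (verts G \<times> verts G) \<union> case_prod Leaf ` (verts G \<times> {..<s})"
  proof
    fix l assume "l \<in> L"
    then show "l \<in> Old ` verts G \<union> case_prod Sub ` (verts G \<times> verts G) \<union> case_prod Leaf ` (verts G \<times> {..<s})"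
      using simple_graph_edgeD[OF simple_G] by (cases l) force+
  qed
  then show ?thesis
    by (rule finite_subset) (simp add: finite_verts_G)
qed

lemma inv_into_\<phi> [simp]: "a \<in> L \<Longrightarrow> inv_into L \<phi> (\<phi> a) = a"
  using inj by (simp add: inv_into_f_f)

lemma edge_H_iff:
  assumes "a \<in> L" "b \<in> L"
  shows "{\<phi> a, \<phi> b} \<in> edges H \<longleftrightarrow> adj a b"
proof
  assume "{\<phi> a, \<phi> b} \<in> edges H"
  then obtain a' b' where e: "{\<phi> a, \<phi> b} = {\<phi> a', \<phi> b'}" and adj: "adj a' b'"
    unfolding edges_H by blast
  then have "a = a' \<and> b = b' \<or> a = b' \<and> b = a'"
    using inj assms adj_in_L[OF adj] by (auto simp: doubleton_eq_iff dest: inj_onD)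
  then show "adj a b"
    using adj vicsek_adj_sym by blast
qed (auto simp: edges_H)

lemma simple_H: "simple_graph H"
  unfolding simple_graph_def
proof (intro conjI ballI)
  show "finite (verts H)"
    unfolding verts_H using finite_L by simp
  fix e assume "e \<in> edges H"
  then obtain a b where e: "e = {\<phi> a, \<phi> b}" and adj: "adj a b"
    unfolding edges_H by blast
  then have "\<phi> a \<noteq> \<phi> b"
    using adj_in_L[OF adj] vicsek_adj_irrefl[OF adj] inj by (auto dest: inj_onD)
  then show "\<exists>u v. e = {u, v} \<and> u \<noteq> v \<and> u \<in> verts H \<and> v \<in> verts H"
    using e adj_in_L[OF adj] verts_H by blast
qed

lemma level_function_transfer:
  assumes "z \<in> L" "F z = 0"
    and "\<And>a b. adj a b \<Longrightarrow> F a = Suc (F b) \<or> F b = Suc (F a)"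
    and "\<And>x. x \<in> L \<Longrightarrow> x \<noteq> z \<Longrightarrow> \<exists>!y. adj x y \<and> Suc (F y) = F x"
  shows "level_function H (\<phi> z) (\<lambda>y. F (inv_into L \<phi> y))"
  unfolding level_function_def
proof (intro conjI allI impI ballI)
  show "\<phi> z \<in> verts H" "F (inv_into L \<phi> (\<phi> z)) = 0"
    using assms(1,2) verts_H by simp_all
next
  fix x y assume "{x, y} \<in> edges H"
  then obtain a b where "{x, y} = {\<phi> a, \<phi> b}" and adj: "adj a b"
    unfolding edges_H by blast
  then show "F (inv_into L \<phi> x) = Suc (F (inv_into L \<phi> y)) \<or> F (inv_into L \<phi> y) = Suc (F (inv_into L \<phi> x))"
    using assms(3)[OF adj] adj_in_L[OF adj] by (auto simp: doubleton_eq_iff)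
next
  fix x assume x: "x \<in> verts H" "x \<noteq> \<phi> z"
  then obtain l where l: "l \<in> L" "x = \<phi> l" "l \<noteq> z"
    using verts_H by auto
  obtain p where p: "adj l p" "Suc (F p) = F l" and p_unique: "\<And>m. adj l m \<and> Suc (F m) = F l \<Longrightarrow> m = p"
    using assms(4)[OF l(1,3)] by blast
  have "p \<in> L"
    using adj_in_L[OF p(1)] by blast
  show "\<exists>!y. {x, y} \<in> edges H \<and> Suc (F (inv_into L \<phi> y)) = F (inv_into L \<phi> x)"
  proof (rule ex1I[of _ "\<phi> p"])
    show "{x, \<phi> p} \<in> edges H \<and> Suc (F (inv_into L \<phi> (\<phi> p))) = F (inv_into L \<phi> x)"
      using edge_H_iff[OF l(1) \<open>p \<in> L\<close>] p l \<open>p \<in> L\<close> by simp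
  next
    fix y assume y: "{x, y} \<in> edges H \<and> Suc (F (inv_into L \<phi> y)) = F (inv_into L \<phi> x)"
    then obtain m where m: "m \<in> L" "y = \<phi> m"
      using simple_graph_edgeD[OF simple_H] verts_H by blast
    then have "m = p"
      using p_unique edge_H_iff[OF l(1) m(1)] y l by simp
    then show "y = \<phi> p"
      using m by simp
  qed
qed

lemma level_function_H_Old:
  assumes c: "c \<in> verts G"
  shows "level_function H (\<phi> (Old c)) (\<lambda>y. subdivided_level (\<lambda>x. gdist G x c) (inv_into L \<phi> y))"
proof -
  have D: "level_function G c (\<lambda>x. gdist G x c)"
    using tree_like_level_gdist[OF tree_like_G c] .
  show ?thesis
    using c level_functionD(2)[OF D] subdivided_level_adj[OF D]
      subdivided_level_unique_parent[OF simple_G D]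
    by (intro level_function_transfer) simp_all
qed

lemma tree_like_H: "tree_like H"
proof -
  obtain c where "c \<in> verts G"
    using tree_like_G unfolding tree_like_def level_function_def by blast
  then show ?thesis
    using level_function_H_Old simple_H unfolding tree_like_def by blast
qed

lemma gdist_H_Old:
  assumes "c \<in> verts G" "c' \<in> verts G"
  shows "gdist H (\<phi> (Old c')) (\<phi> (Old c)) = 3 * gdist G c' c"
  using gdist_eq_level[OF simple_H level_function_H_Old[OF assms(1)], of "\<phi> (Old c')"] assms verts_H
  by simp

abbreviation nbrs :: "'a \<Rightarrow> 'a set" where
  "nbrs x \<equiv> {y. {x, y} \<in> edges H}"

lemma nbrs_H:
  assumes "l \<in> L"
  shows "nbrs (\<phi> l) = \<phi> ` {m. adj l m}"
proof (intro equalityI subsetI)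
  fix y assume y: "y \<in> nbrs (\<phi> l)"
  then have "y \<in> verts H"
    using simple_graph_edgeD(2)[OF simple_H, of "\<phi> l" y] by simp
  then obtain m where m: "m \<in> L" "y = \<phi> m"
    using verts_H by auto
  then show "y \<in> \<phi> ` {m. adj l m}"
    using y edge_H_iff[OF assms m(1)] by simp
next
  fix y assume "y \<in> \<phi> ` {m. adj l m}"
  then obtain m where "adj l m" "y = \<phi> m"
    by blast
  then show "y \<in> nbrs (\<phi> l)"
    using edge_H_iff[OF assms] adj_in_L by simp
qed

lemma adj_subset_L: "{m. adj l m} \<subseteq> L"
  using adj_in_L by auto

lemma finite_adj: "finite {m. adj l m}"
  using adj_subset_L finite_L by (rule finite_subset)

lemma degree_H:
  assumes "l \<in> L"
  shows "degree H (\<phi> l) = card {m. adj l m}"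
proof -
  have "inj_on \<phi> {m. adj l m}"
    using inj adj_subset_L by (rule inj_on_subset)
  then show ?thesis
    using degree_eq_card_neighbours[OF simple_H] nbrs_H[OF assms] by (simp add: card_image)
qed

lemma card_adj_Old:
  assumes "w \<in> verts G"
  shows "card {m. adj (Old w) m} = s"
proof -
  have "{m. adj (Old w) m} = Sub w ` {v. {w, v} \<in> edges G} \<union> Leaf w ` {..< s - degree G w}"
  proof (intro equalityI subsetI)
    fix m assume "m \<in> {m. adj (Old w) m}"
    then show "m \<in> Sub w ` {v. {w, v} \<in> edges G} \<union> Leaf w ` {..< s - degree G w}"
      unfolding mem_Collect_eq vicsek_adj_Old by auto
  next
    fix m assume "m \<in> Sub w ` {v. {w, v} \<in> edges G} \<union> Leaf w ` {..< s - degree G w}"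
    then show "m \<in> {m. adj (Old w) m}"
      using assms simple_graph_edgeD(3)[OF simple_G] unfolding mem_Collect_eq vicsek_adj_Old by auto
  qed
  moreover have "{v. {w, v} \<in> edges G} \<subseteq> verts G"
    using simple_graph_edgeD(2)[OF simple_G] by blast
  then have "finite {v. {w, v} \<in> edges G}"
    using finite_subset finite_verts_G by blast
  moreover have "card (Sub w ` {v. {w, v} \<in> edges G}) = degree G w"
    using degree_eq_card_neighbours[OF simple_G] by (simp add: card_image inj_on_def)
  moreover have "card (Leaf w ` {..< s - degree G w}) = s - degree G w"
    by (simp add: card_image inj_on_def)
  moreover have "Sub w ` {v. {w, v} \<in> edges G} \<inter> Leaf w ` {..< s - degree G w} = {}"
    by blast
  ultimately have "card {m. adj (Old w) m} = degree G w + (s - degree G w)"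
    by (simp add: card_Un_disjoint)
  then show ?thesis
    using degree_G assms by simp
qed

lemma card_adj_le:
  assumes "l \<in> L"
  shows "card {m. adj l m} \<le> s"
proof (cases l)
  case (Old w)
  then show ?thesis
    using assms card_adj_Old by simp
next
  case (Sub w v)
  have "{m. adj l m} \<subseteq> {Old w, Sub v w}"
    unfolding Sub vicsek_adj_Sub by blast
  then have "card {m. adj l m} \<le> card {Old w, Sub v w}"
    by (rule card_mono[rotated]) simp
  then show ?thesis
    using s_ge_2 by simp
next
  case (Leaf w i)
  have "{m. adj l m} \<subseteq> {Old w}"
    unfolding Leaf vicsek_adj_Leaf by blast
  then have "card {m. adj l m} \<le> card {Old w}"
    by (rule card_mono[rotated]) simp
  then show ?thesis
    using s_ge_2 by simp
qed

lemma degree_H_le: "\<forall>y\<in>verts H. degree H y \<le> s"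
  using verts_H degree_H card_adj_le by auto

abbreviation old :: "'a \<Rightarrow> 'a" where
  "old c \<equiv> \<phi> (Old c)"

abbreviation cluster :: "'a \<Rightarrow> 'a set" where
  "cluster c \<equiv> insert (old c) (nbrs (old c))"

lemma old_in_verts_H: "c \<in> verts G \<Longrightarrow> old c \<in> verts H"
  using verts_H by simp

lemma old_eq_iff: "c \<in> verts G \<Longrightarrow> c' \<in> verts G \<Longrightarrow> old c = old c' \<longleftrightarrow> c = c'"
  using inj by (auto dest: inj_onD)

lemma inj_on_old: "inj_on old (verts G)"
  by (intro inj_onI) (simp add: old_eq_iff)

lemma cluster_eq_image:
  assumes "c \<in> verts G"
  shows "cluster c = \<phi> ` {l \<in> L. vlabel_base l = c}"
proof -
  have "{l \<in> L. vlabel_base l = c} = insert (Old c) {m. adj (Old c) m}"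
  proof (intro equalityI subsetI)
    fix l assume "l \<in> {l \<in> L. vlabel_base l = c}"
    then show "l \<in> insert (Old c) {m. adj (Old c) m}"
      by (cases l) (auto simp: vicsek_adj_Old)
  next
    fix l assume "l \<in> insert (Old c) {m. adj (Old c) m}"
    then show "l \<in> {l \<in> L. vlabel_base l = c}"
      using assms adj_subset_L by (auto simp: vicsek_adj_Old)
  qed
  then show ?thesis
    using nbrs_H[of "Old c"] assms by simp
qed

lemma sum_verts_H_clusters: "(\<Sum>y\<in>verts H. h y) = (\<Sum>c\<in>verts G. \<Sum>y\<in>cluster c. h y)"
proof -
  have "vlabel_base ` L \<subseteq> verts G"
  proof
    fix c assume "c \<in> vlabel_base ` L"
    then obtain l where "l \<in> L" "c = vlabel_base l"
      by blast
    then show "c \<in> verts G"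
      using simple_graph_edgeD(1)[OF simple_G] by (cases l) auto
  qed
  have "(\<Sum>y\<in>verts H. h y) = (\<Sum>l\<in>L. h (\<phi> l))"
    unfolding verts_H using inj by (simp add: sum.reindex)
  also have "\<dots> = (\<Sum>c\<in>verts G. \<Sum>l\<in>{l \<in> L. vlabel_base l = c}. h (\<phi> l))"
    using sum.group[OF finite_L finite_verts_G \<open>vlabel_base ` L \<subseteq> verts G\<close>, of "\<lambda>l. h (\<phi> l)"] by simp
  also have "\<dots> = (\<Sum>c\<in>verts G. \<Sum>y\<in>cluster c. h y)"
  proof (rule sum.cong[OF refl])
    fix c assume "c \<in> verts G"
    have "inj_on \<phi> {l \<in> L. vlabel_base l = c}"
      using inj by (rule inj_on_subset) blast
    then show "(\<Sum>l\<in>{l \<in> L. vlabel_base l = c}. h (\<phi> l)) = (\<Sum>y\<in>cluster c. h y)"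
      unfolding cluster_eq_image[OF \<open>c \<in> verts G\<close>] by (simp add: sum.reindex)
  qed
  finally show ?thesis .
qed

lemma nbrs_old:
  assumes "c \<in> verts G"
  shows "finite (nbrs (old c))" "card (nbrs (old c)) = s" "old c \<notin> nbrs (old c)"
proof -
  show "finite (nbrs (old c))"
    using nbrs_H[of "Old c"] finite_adj assms by simp
  show "card (nbrs (old c)) = s"
    using degree_H[of "Old c"] degree_eq_card_neighbours[OF simple_H] card_adj_Old assms by simp
  show "old c \<notin> nbrs (old c)"
    using simple_graph_edgeD(3)[OF simple_H, of "old c" "old c"] by blast
qed

lemma card_verts_H: "card (verts H) = (s + 1) * card (verts G)"
  using sum_verts_H_clusters[of "\<lambda>_. 1::nat"] nbrs_old by simp

lemma cluster_gdist_sum: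
  assumes x: "x \<in> verts H" and c: "c \<in> verts G"
  shows "(\<Sum>y\<in>cluster c. real (gdist H y x))
    = (real s + 1) * real (gdist H (old c) x) + real s - 2 + (if old c = x then 2 else 0)"
proof -
  have "(\<Sum>y\<in>nbrs (old c). real (gdist H y x))
      = real s * (real (gdist H (old c) x) + 1) - 2 + (if old c = x then 2 else 0)"
    using level_function_neighbour_sum[OF tree_like_level_gdist[OF tree_like_H x] old_in_verts_H[OF c]]
      nbrs_old[OF c] by simp
  moreover have "(\<Sum>y\<in>cluster c. real (gdist H y x))
      = real (gdist H (old c) x) + (\<Sum>y\<in>nbrs (old c). real (gdist H y x))"
    using nbrs_old(1,3)[OF c] by (rule sum.insert)
  ultimately show ?thesis
    by (simp add: algebra_simps split del: if_split)
qed

lemma sum_indicator_old: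
  "(\<Sum>c\<in>verts G. if old c = x then 2 else 0) = (if x \<in> old ` verts G then 2 else (0::real))"
proof -
  have "(\<Sum>c\<in>verts G. if old c = x then 2 else 0) = (\<Sum>y\<in>old ` verts G. if y = x then 2 else (0::real))"
    using inj_on_old by (simp add: sum.reindex)
  also have "\<dots> = (if x \<in> old ` verts G then 2 else 0)"
    using finite_verts_G by (simp add: sum.delta')
  finally show ?thesis .
qed

lemma gdist_sum_H:
  assumes "x \<in> verts H"
  shows "(\<Sum>y\<in>verts H. real (gdist H y x))
    = (real s + 1) * (\<Sum>c\<in>verts G. real (gdist H (old c) x))
      + (real s - 2) * real (card (verts G)) + (if x \<in> old ` verts G then 2 else 0)"
proof -
  have "(\<Sum>y\<in>verts H. real (gdist H y x)) = (\<Sum>c\<in>verts G. \<Sum>y\<in>cluster c. real (gdist H y x))"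
    by (rule sum_verts_H_clusters)
  also have "\<dots> = (\<Sum>c\<in>verts G. (real s + 1) * real (gdist H (old c) x) + (real s - 2)
      + (if old c = x then 2 else 0))"
    using cluster_gdist_sum[OF assms] by (intro sum.cong) simp_all
  also have "\<dots> = (real s + 1) * (\<Sum>c\<in>verts G. real (gdist H (old c) x))
      + (real s - 2) * real (card (verts G)) + (if x \<in> old ` verts G then 2 else 0)"
    by (simp add: sum.distrib sum_distrib_left sum_indicator_old)
  finally show ?thesis .
qed

lemma gdist_sum_from_old:
  assumes c: "c \<in> verts G"
  shows "(\<Sum>x\<in>verts H. real (gdist H (old c) x))
    = 3 * (real s + 1) * (\<Sum>c'\<in>verts G. real (gdist G c' c)) + (real s - 2) * real (card (verts G)) + 2"
proof -
  have "(\<Sum>x\<in>verts H. real (gdist H (old c) x)) = (\<Sum>x\<in>verts H. real (gdist H x (old c)))"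
    by (simp add: gdist_commute)
  also have "\<dots> = (real s + 1) * (\<Sum>c'\<in>verts G. real (gdist H (old c') (old c)))
      + (real s - 2) * real (card (verts G)) + 2"
    using gdist_sum_H[OF old_in_verts_H[OF c]] c by simp
  also have "(\<Sum>c'\<in>verts G. real (gdist H (old c') (old c))) = 3 * (\<Sum>c'\<in>verts G. real (gdist G c' c))"
    using gdist_H_Old[OF c] by (simp add: sum_distrib_left)
  finally show ?thesis
    by (simp add: algebra_simps)
qed

lemma sum_gdist_from_old:
  "(\<Sum>x\<in>verts H. \<Sum>c\<in>verts G. real (gdist H (old c) x))
    = 3 * (real s + 1) * (2 * wiener G) + (real s - 2) * real (card (verts G)) ^ 2 + 2 * real (card (verts G))"
proof -
  have "(\<Sum>x\<in>verts H. \<Sum>c\<in>verts G. real (gdist H (old c) x))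
      = (\<Sum>c\<in>verts G. 3 * (real s + 1) * (\<Sum>c'\<in>verts G. real (gdist G c' c))
          + (real s - 2) * real (card (verts G)) + 2)"
    by (subst sum.swap) (intro sum.cong refl gdist_sum_from_old)
  then show ?thesis
    unfolding wiener_eq_sum by (simp add: sum.distrib sum_distrib_left power2_eq_square)
qed

lemma wiener_H:
  "wiener H = 3 * (real s + 1) ^ 2 * wiener G
     + (real s - 2) * (real s + 1) * real (card (verts G)) ^ 2 + (real s + 2) * real (card (verts G))"
proof -
  define n where "n = real (card (verts G))"
  have "card (old ` verts G) = card (verts G)"
    using inj_on_old by (rule card_image)
  then have indicators: "(\<Sum>x\<in>verts H. if x \<in> old ` verts G then 2 else 0) = 2 * n"
    unfolding n_def using old_in_verts_H simple_H
    by (simp add: sum.If_cases simple_graph_def Int_absorb1 image_subsetI)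
  have "2 * wiener H = (\<Sum>x\<in>verts H. \<Sum>y\<in>verts H. real (gdist H y x))"
    by (rule wiener_eq_sum)
  also have "\<dots> = (\<Sum>x\<in>verts H. (real s + 1) * (\<Sum>c\<in>verts G. real (gdist H (old c) x))
      + (real s - 2) * n + (if x \<in> old ` verts G then 2 else 0))"
    unfolding n_def by (rule sum.cong[OF refl]) (rule gdist_sum_H)
  also have "\<dots> = (real s + 1) * (\<Sum>x\<in>verts H. \<Sum>c\<in>verts G. real (gdist H (old c) x))
      + (real s - 2) * n * ((real s + 1) * n) + 2 * n"
    using indicators card_verts_H unfolding n_def
    by (simp add: sum.distrib sum_distrib_left; simp add: algebra_simps)
  also have "\<dots> = (real s + 1) * (3 * (real s + 1) * (2 * wiener G) + (real s - 2) * n ^ 2 + 2 * n)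
      + (real s - 2) * n * ((real s + 1) * n) + 2 * n"
    unfolding sum_gdist_from_old n_def ..
  finally show ?thesis
    unfolding n_def by (simp add: algebra_simps power2_eq_square)
qed

end

section \<open>Iterating the operation\<close>

lemma recurrence_closed_form:
  fixes q n :: real and w :: "nat \<Rightarrow> real"
  assumes q: "q > 1"
    and rec: "\<And>t. w (Suc t) = 3 * q ^ 2 * w t + (q - 3) * q * (n * q ^ t) ^ 2 + (q + 1) * (n * q ^ t)"
  shows "w t = 3 ^ t * q ^ (2 * t) * w 0 + (q - 3) * q * n ^ 2 * (3 ^ t - 1) * (q ^ (2 * t) / q ^ 2) / 2
    + (q + 1) * n * (q ^ t / q) * (3 ^ t * q ^ t - 1) / (3 * q - 1)"
proof (induction t)
  case (Suc t)
  have "3 * q - 1 \<noteq> 0"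
    using q by simp
  then show ?case
    using q unfolding rec Suc by (simp add: field_simps power_mult power2_eq_square)
qed simp

lemma vicsek_step_invariants:
  assumes "tree_like G" "2 \<le> s" "\<forall>v\<in>verts G. degree G v \<le> s" "vicsek_step s G H"
  shows "tree_like H" "\<forall>v\<in>verts H. degree H v \<le> s" "card (verts H) = (s + 1) * card (verts G)"
    "wiener H = 3 * (real s + 1) ^ 2 * wiener G
       + (real s - 2) * (real s + 1) * real (card (verts G)) ^ 2 + (real s + 2) * real (card (verts G))"
proof -
  obtain \<phi> where "inj_on \<phi> (vicsek_labels s G)" "verts H = \<phi> ` vicsek_labels s G"
    "edges H = {{\<phi> a, \<phi> b} | a b. vicsek_adj s G a b}"
    using vicsek_step_edges[OF assms(4)] .
  with assms interpret vicsek_image s G H \<phi>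
    by unfold_locales
  show "tree_like H" "\<forall>v\<in>verts H. degree H v \<le> s" "card (verts H) = (s + 1) * card (verts G)"
    "wiener H = 3 * (real s + 1) ^ 2 * wiener G
       + (real s - 2) * (real s + 1) * real (card (verts G)) ^ 2 + (real s + 2) * real (card (verts G))"
    by (rule tree_like_H degree_H_le card_verts_H wiener_H)+
qed

lemma power_int_diff_one: "x \<noteq> 0 \<Longrightarrow> x powi (int k - 1) = x ^ k / (x :: 'a :: field)"
  by (simp add: power_int_diff)

lemma power_int_double_diff_one:
  assumes "x \<noteq> 0"
  shows "x powi (2 * (int k - 1)) = x ^ (2 * k) / (x :: 'a :: field) ^ 2"
proof -
  have "x powi (2 * (int k - 1)) = (x powi (int k - 1)) ^ 2"
    unfolding mult.commute[of 2] power_int_mult by simp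
  also have "\<dots> = x ^ (2 * k) / x ^ 2"
    using assms by (simp add: power_int_diff_one power_divide mult.commute flip: power_mult)
  finally show ?thesis .
qed

lemma vicsek_iteration:
  assumes "2 \<le> s" "is_tree T" "\<forall>v\<in>verts T. degree T v \<le> s"
    and "V 0 = T" "\<forall>k. vicsek_step s (V k) (V (Suc k))"
  shows "card (verts (V t)) = card (verts T) * (s + 1) ^ t"
    and "wiener (V (Suc t)) = 3 * (real s + 1) ^ 2 * wiener (V t)
      + (real s - 2) * (real s + 1) * (real (card (verts T)) * (real s + 1) ^ t) ^ 2
      + (real s + 2) * (real (card (verts T)) * (real s + 1) ^ t)"
proof -
  have invariants: "tree_like (V t) \<and> (\<forall>v\<in>verts (V t). degree (V t) v \<le> s)
      \<and> card (verts (V t)) = card (verts T) * (s + 1) ^ t" for t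
  proof (induction t)
    case 0
    show ?case
      using assms tree_like_if_tree by simp
  next
    case (Suc t)
    then show ?case
      using vicsek_step_invariants[OF _ assms(1) _ spec[OF assms(5), of t]]
      by (simp add: algebra_simps)
  qed
  then show "card (verts (V t)) = card (verts T) * (s + 1) ^ t"
    by blast
  show "wiener (V (Suc t)) = 3 * (real s + 1) ^ 2 * wiener (V t)
      + (real s - 2) * (real s + 1) * (real (card (verts T)) * (real s + 1) ^ t) ^ 2
      + (real s + 2) * (real (card (verts T)) * (real s + 1) ^ t)"
    using vicsek_step_invariants(4)[OF _ assms(1) _ spec[OF assms(5), of t]] invariants[of t]
    by (simp add: ac_simps)
qed

theorem theorem3:
  fixes s n :: nat and T :: "'a graph" and V :: "nat \<Rightarrow> 'a graph"
  assumes "s \<ge> 2"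
    and "is_tree T"
    and "card (verts T) = n"
    and "\<forall>v\<in>verts T. degree T v \<le> s"
    and "V 0 = T"
    and "\<forall>k. vicsek_step s (V k) (V (Suc k))"
  shows "\<forall>t. card (verts (V t)) = n * (s + 1) ^ t \<and>
    wiener (V t) =
      3 ^ t * real (s + 1) ^ (2 * t) * wiener T
      + real (s - 2) * real (s + 1) * real n ^ 2 * (3 ^ t - 1) * (real (s + 1) powi (2 * (int t - 1))) / 2
      + real (s + 2) * real n * (real (s + 1) powi (int t - 1)) * (3 ^ t * real (s + 1) ^ t - 1)
          / (3 * real s + 2)"
proof -
  note iteration = vicsek_iteration[OF assms(1,2,4,5,6), unfolded assms(3)]
  define q where "q = real s + 1"
  have q: "q > 1"
    using assms(1) unfolding q_def by simp
  have shifts: "real s - 2 = q - 3" "real s + 2 = q + 1"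
    unfolding q_def by simp_all
  have recurrence: "wiener (V (Suc t)) = 3 * q ^ 2 * wiener (V t) + (q - 3) * q * (real n * q ^ t) ^ 2
      + (q + 1) * (real n * q ^ t)" for t
    using iteration(2)[of t, folded q_def, unfolded shifts] .
  have closed_form: "wiener (V t) = 3 ^ t * q ^ (2 * t) * wiener T
      + (q - 3) * q * real n ^ 2 * (3 ^ t - 1) * (q ^ (2 * t) / q ^ 2) / 2
      + (q + 1) * real n * (q ^ t / q) * (3 ^ t * q ^ t - 1) / (3 * q - 1)" for t
    using recurrence_closed_form[where w = "\<lambda>t. wiener (V t)", OF q recurrence] assms(5) by simp
  have powers: "q powi (int t - 1) = q ^ t / q" "q powi (2 * (int t - 1)) = q ^ (2 * t) / q ^ 2" for t
    using q by (simp_all only: power_int_diff_one power_int_double_diff_one)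
  have casts: "real (s + 1) = q" "real (s - 2) = q - 3" "real (s + 2) = q + 1" "3 * real s + 2 = 3 * q - 1"
    using assms(1) unfolding q_def by simp_all
  show ?thesis
    unfolding casts powers using iteration(1) closed_form by simp
qed

end
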